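(* If $G$ is a connected graph with $n$ vertices and $k>0$ basis forced vertices, then $k\leq n-\dim(G)-1$. Moreover, $k\leq \frac{n-1}{2}$.
   Context: All graphs are finite and simple. For vertices $u,v$ of a connected graph $G$, $d(u,v)$ is the length of a shortest $u$–$v$ path. A set $R\subseteq V(G)$ is a resolving set if for all distinct $x,y\in V(G)$ there is $r\in R$ with $d(r,x)\neq d(r,y)$. The metric dimension $\dim(G)$ is the minimum cardinality of a resolving set, and a resolving set of cardinality $\dim(G)$ is a metric basis. A vertex is a basis forced vertex if it belongs to every metric basis of $G$. *)

theory Defs
  imports Main
begin

definition simple_graph :: "'a set \<Rightarrow> ('a \<Rightarrow> 'a \<Rightarrow> bool) \<Rightarrow> bool" where
  "simple_graph V E \<longleftrightarrow> finite V \<and> (\<forall>u v. E u v \<longrightarrow> u \<in> V \<and> v \<in> V)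
     \<and> (\<forall>u v. E u v \<longrightarrow> E v u) \<and> (\<forall>v. \<not> E v v)"

definition is_walk :: "'a set \<Rightarrow> ('a \<Rightarrow> 'a \<Rightarrow> bool) \<Rightarrow> 'a list \<Rightarrow> bool" where
  "is_walk V E p \<longleftrightarrow> p \<noteq> [] \<and> set p \<subseteq> V \<and> (\<forall>i. Suc i < length p \<longrightarrow> E (p ! i) (p ! Suc i))"

definition has_walk :: "'a set \<Rightarrow> ('a \<Rightarrow> 'a \<Rightarrow> bool) \<Rightarrow> 'a \<Rightarrow> 'a \<Rightarrow> nat \<Rightarrow> bool" where
  "has_walk V E u v n \<longleftrightarrow> (\<exists>p. is_walk V E p \<and> hd p = u \<and> last p = v \<and> length p = Suc n)"

definition connected_graph :: "'a set \<Rightarrow> ('a \<Rightarrow> 'a \<Rightarrow> bool) \<Rightarrow> bool" where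
  "connected_graph V E \<longleftrightarrow> V \<noteq> {} \<and> (\<forall>u\<in>V. \<forall>v\<in>V. \<exists>n. has_walk V E u v n)"

definition gdist :: "'a set \<Rightarrow> ('a \<Rightarrow> 'a \<Rightarrow> bool) \<Rightarrow> 'a \<Rightarrow> 'a \<Rightarrow> nat" where
  "gdist V E u v = (LEAST n. has_walk V E u v n)"

definition resolving_set :: "'a set \<Rightarrow> ('a \<Rightarrow> 'a \<Rightarrow> bool) \<Rightarrow> 'a set \<Rightarrow> bool" where
  "resolving_set V E R \<longleftrightarrow> R \<subseteq> V \<and>
     (\<forall>x\<in>V. \<forall>y\<in>V. x \<noteq> y \<longrightarrow> (\<exists>r\<in>R. gdist V E r x \<noteq> gdist V E r y))"

definition metric_dim :: "'a set \<Rightarrow> ('a \<Rightarrow> 'a \<Rightarrow> bool) \<Rightarrow> nat" where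
  "metric_dim V E = (LEAST k. \<exists>R. resolving_set V E R \<and> card R = k)"

definition metric_basis :: "'a set \<Rightarrow> ('a \<Rightarrow> 'a \<Rightarrow> bool) \<Rightarrow> 'a set \<Rightarrow> bool" where
  "metric_basis V E R \<longleftrightarrow> resolving_set V E R \<and> card R = metric_dim V E"

definition basis_forced_vertices :: "'a set \<Rightarrow> ('a \<Rightarrow> 'a \<Rightarrow> bool) \<Rightarrow> 'a set" where
  "basis_forced_vertices V E = {v \<in> V. \<forall>R. metric_basis V E R \<longrightarrow> v \<in> R}"

end

theory Submission
  imports Defs "HOL-Library.FuncSet"
begin

(*
  Fix a metric basis B and a forced vertex v. The set B - {v} is too small to resolve G, so it
  leaves two vertices unresolved; if one of them is v and the other is z, then exchanging v for z
  gives a set of size dim G avoiding v, which cannot be resolving either, and its unresolved pair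
  again yields two vertices outside B. Either way there are two vertices outside B whose distance
  vectors to B differ exactly in the coordinate v. Hence forgetting the coordinates of the k forced
  vertices one at a time lowers the number of distinct distance vectors of vertices outside B by
  at least one per step; as one vector remains, the n - dim G vertices outside B carry at least
  k + 1 distinct vectors. Since the forced vertices lie in B, also k <= dim G, so 2k <= n - 1.
*)

lemma card_restrict_Compl_image_add_card_le:
  fixes A :: "('a \<Rightarrow> 'b) set"
  assumes "finite A" "finite F"
    and "\<forall>v\<in>F. \<exists>f\<in>A. \<exists>g\<in>A. f \<noteq> g \<and> (\<forall>b. b \<noteq> v \<longrightarrow> f b = g b)"
  shows "card ((\<lambda>f. restrict f (- F)) ` A) + card F \<le> card A"
  using assms(2,3)
proof (induction F rule: finite_induct)
  case empty
  then show ?case by (simp add: restrict_UNIV)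
next
  case (insert v S)
  let ?A = "(\<lambda>f. restrict f (- S)) ` A"
  let ?erase = "\<lambda>f. restrict f (- {v})"
  have erase_image: "(\<lambda>f. restrict f (- insert v S)) ` A = ?erase ` ?A"
  proof -
    have "?erase ` ?A = (\<lambda>f. restrict f (- S \<inter> - {v})) ` A"
      by (simp only: image_image restrict_restrict)
    also have "- S \<inter> - {v} = - insert v S"
      by blast
    finally show ?thesis ..
  qed
  obtain f g where fg: "f \<in> A" "g \<in> A" "f \<noteq> g" "\<forall>b. b \<noteq> v \<longrightarrow> f b = g b"
    using insert.prems by blast
  have "restrict f (- S) \<noteq> restrict g (- S)"
    using fg(3,4) insert.hyps(2) by (metis ext restrict_apply ComplI)
  moreover have "?erase (restrict f (- S)) = ?erase (restrict g (- S))"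
    using fg(4) by (auto simp: restrict_def)
  ultimately have "\<not> inj_on ?erase ?A"
    using fg(1,2) by (meson image_eqI inj_onD)
  moreover have "finite ?A"
    using assms(1) by blast
  ultimately have "card (?erase ` ?A) < card ?A"
    using card_image_le eq_card_imp_inj_on le_neq_implies_less by metis
  moreover have "card ?A + card S \<le> card A"
    using insert.prems by (intro insert.IH) simp
  ultimately show ?case
    unfolding erase_image using card_insert_disjoint[OF insert.hyps] by linarith
qed

lemma gdist_self:
  assumes "v \<in> V"
  shows "gdist V E v v = 0"
proof -
  have "has_walk V E v v 0"
    unfolding has_walk_def is_walk_def using assms by (intro exI[of _ "[v]"]) auto
  then show ?thesis
    unfolding gdist_def by (metis Least_le le_zero_eq)
qed

lemma gdist_eq_0_iff:
  assumes "connected_graph V E" "u \<in> V" "v \<in> V"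
  shows "gdist V E u v = 0 \<longleftrightarrow> u = v"
proof
  assume dist: "gdist V E u v = 0"
  obtain m where "has_walk V E u v m"
    using assms unfolding connected_graph_def by blast
  then have "has_walk V E u v (gdist V E u v)"
    unfolding gdist_def by (rule LeastI)
  then obtain p where "hd p = u" "last p = v" "length p = 1"
    using dist unfolding has_walk_def by auto
  then show "u = v"
    by (metis One_nat_def hd_conv_nth last_conv_nth diff_Suc_1 list.size(3) zero_neq_one)
qed (use assms gdist_self in simp)

lemma resolving_set_vertex_set:
  assumes "connected_graph V E"
  shows "resolving_set V E V"
  unfolding resolving_set_def using assms gdist_self gdist_eq_0_iff by (metis order_refl)

lemma metric_dim_le_card:
  assumes "resolving_set V E R"
  shows "metric_dim V E \<le> card R"
  unfolding metric_dim_def using assms by (intro Least_le) blast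

lemma metric_basis_exists:
  assumes "connected_graph V E"
  obtains B where "metric_basis V E B"
proof -
  have "\<exists>k R. resolving_set V E R \<and> card R = k"
    using resolving_set_vertex_set[OF assms] by blast
  from LeastI_ex[OF this] show ?thesis
    using that unfolding metric_basis_def metric_dim_def by blast
qed

lemma not_resolving_setE:
  assumes "connected_graph V E" "R \<subseteq> V" "\<not> resolving_set V E R"
  obtains x y where "x \<in> V - R" "y \<in> V - R" "x \<noteq> y"
    "\<forall>r\<in>R. gdist V E r x = gdist V E r y"
proof -
  obtain x y where xy: "x \<in> V" "y \<in> V" "x \<noteq> y" "\<forall>r\<in>R. gdist V E r x = gdist V E r y"
    using assms(2,3) unfolding resolving_set_def by blast
  have "x \<notin> R" "y \<notin> R"
    using xy assms(1,2) gdist_self gdist_eq_0_iff by metis+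
  then show ?thesis
    using that xy by blast
qed

lemma not_resolving_set_pair_or_twin:
  assumes "connected_graph V E" "R \<subseteq> V" "\<not> resolving_set V E R"
  shows "(\<exists>x\<in>V - insert v R. \<exists>y\<in>V - insert v R. x \<noteq> y \<and>
            (\<forall>r\<in>R. gdist V E r x = gdist V E r y))
       \<or> (\<exists>z\<in>V - insert v R. \<forall>r\<in>R. gdist V E r z = gdist V E r v)"
proof -
  obtain x y where xy: "x \<in> V - R" "y \<in> V - R" "x \<noteq> y"
    "\<forall>r\<in>R. gdist V E r x = gdist V E r y"
    using not_resolving_setE[OF assms] .
  then show ?thesis
    by (cases "v \<in> {x, y}") auto
qed

lemma metric_basis_forced_vertex_pair:
  assumes conn: "connected_graph V E" and fin: "finite V"
    and basis: "metric_basis V E B" and forced: "v \<in> basis_forced_vertices V E"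
  shows "\<exists>x\<in>V - B. \<exists>y\<in>V - B. x \<noteq> y \<and> (\<forall>b\<in>B - {v}. gdist V E b x = gdist V E b y)"
proof -
  have BV: "B \<subseteq> V" and card_B: "card B = metric_dim V E"
    using basis unfolding metric_basis_def resolving_set_def by auto
  have "v \<in> B"
    using forced basis unfolding basis_forced_vertices_def by blast
  have "card (B - {v}) < metric_dim V E"
    using card_B card_Diff1_less finite_subset[OF BV fin] \<open>v \<in> B\<close> by metis
  then have "\<not> resolving_set V E (B - {v})"
    using metric_dim_le_card leD by blast
  then consider (pair) ?thesis
    | (twin) z where "z \<in> V - B" "\<forall>b\<in>B - {v}. gdist V E b z = gdist V E b v"
    using not_resolving_set_pair_or_twin[OF conn, of "B - {v}" v] BV \<open>v \<in> B\<close>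
    by (auto simp: insert_absorb)
  then show ?thesis
  proof cases
    case twin
    define B' where "B' = insert z (B - {v})"
    have "B' \<subseteq> V" "v \<notin> B'" "B - {v} \<subseteq> B'" "insert v B' = insert z B"
      using twin BV \<open>v \<in> B\<close> unfolding B'_def by auto
    moreover have "card B' = metric_dim V E"
      using twin card_B finite_subset[OF BV fin] \<open>v \<in> B\<close> unfolding B'_def
      by (metis card_insert_disjoint card_Suc_Diff1 finite_Diff DiffE)
    ultimately have "\<not> resolving_set V E B'"
      using forced unfolding basis_forced_vertices_def metric_basis_def by blast
    then consider (pair') ?thesis
      | (twin') w where "w \<in> V - insert z B" "\<forall>b\<in>B - {v}. gdist V E b w = gdist V E b v"
      using not_resolving_set_pair_or_twin[OF conn \<open>B' \<subseteq> V\<close>, of v]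
        \<open>insert v B' = insert z B\<close> \<open>B - {v} \<subseteq> B'\<close> by blast
    then show ?thesis
    proof cases
      case twin'
      then show ?thesis
        using twin by (intro bexI[of _ z] bexI[of _ w]) auto
    qed
  qed
qed

lemma forced_vertex_distance_vectors_differ_only_at:
  assumes "connected_graph V E" "finite V" "metric_basis V E B" "v \<in> basis_forced_vertices V E"
  defines "A \<equiv> (\<lambda>x. \<lambda>b\<in>B. gdist V E b x) ` (V - B)"
  shows "\<exists>f\<in>A. \<exists>g\<in>A. f \<noteq> g \<and> (\<forall>b. b \<noteq> v \<longrightarrow> f b = g b)"
proof -
  obtain x y where xy: "x \<in> V - B" "y \<in> V - B" "x \<noteq> y"
    "\<forall>b\<in>B - {v}. gdist V E b x = gdist V E b y"
    using metric_basis_forced_vertex_pair[OF assms(1-4)] by blast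
  have "\<exists>b\<in>B. gdist V E b x \<noteq> gdist V E b y"
    using assms(3) xy unfolding metric_basis_def resolving_set_def by blast
  then have "(\<lambda>b\<in>B. gdist V E b x) \<noteq> (\<lambda>b\<in>B. gdist V E b y)"
    by (metis restrict_apply')
  moreover have "\<forall>b. b \<noteq> v \<longrightarrow> (\<lambda>b\<in>B. gdist V E b x) b = (\<lambda>b\<in>B. gdist V E b y) b"
    using xy(4) by simp
  ultimately show ?thesis
    using xy(1,2) unfolding A_def by blast
qed

lemma basis_forced_vertices_subset:
  assumes "metric_basis V E B"
  shows "basis_forced_vertices V E \<subseteq> B"
  using assms unfolding basis_forced_vertices_def by blast

lemma card_basis_forced_vertices_less_card_Diff:
  assumes conn: "connected_graph V E" and fin: "finite V" and basis: "metric_basis V E B"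
    and "basis_forced_vertices V E \<noteq> {}"
  shows "card (basis_forced_vertices V E) < card (V - B)"
proof -
  define F where "F = basis_forced_vertices V E"
  define A where "A = (\<lambda>x. \<lambda>b\<in>B. gdist V E b x) ` (V - B)"
  have "finite F"
    using basis_forced_vertices_subset[OF basis] basis fin
    unfolding F_def metric_basis_def resolving_set_def by (metis rev_finite_subset)
  have twins: "\<forall>v\<in>F. \<exists>f\<in>A. \<exists>g\<in>A. f \<noteq> g \<and> (\<forall>b. b \<noteq> v \<longrightarrow> f b = g b)"
    using forced_vertex_distance_vectors_differ_only_at[OF conn fin basis]
    unfolding A_def F_def by blast
  have "finite A"
    using fin unfolding A_def by simp
  have "A \<noteq> {}"
    using twins assms(4) unfolding F_def by fastforce
  then have "0 < card ((\<lambda>f. restrict f (- F)) ` A)"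
    using \<open>finite A\<close> by (simp add: card_gt_0_iff)
  then have "card F < card A"
    using card_restrict_Compl_image_add_card_le[OF \<open>finite A\<close> \<open>finite F\<close> twins] by linarith
  also have "card A \<le> card (V - B)"
    using fin unfolding A_def by (simp add: card_image_le)
  finally show ?thesis
    unfolding F_def .
qed

theorem theorem8:
  fixes V :: "'a set" and E :: "'a \<Rightarrow> 'a \<Rightarrow> bool" and n k :: nat
  assumes "simple_graph V E"
    and "connected_graph V E"
    and "card V = n"
    and "card (basis_forced_vertices V E) = k"
    and "k > 0"
  shows "k \<le> n - metric_dim V E - 1 \<and> 2 * k \<le> n - 1"
proof -
  have fin: "finite V"
    using assms(1) unfolding simple_graph_def by blast
  obtain B where basis: "metric_basis V E B"
    using metric_basis_exists[OF assms(2)] .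
  have BV: "B \<subseteq> V" and card_B: "card B = metric_dim V E"
    using basis unfolding metric_basis_def resolving_set_def by auto
  have "k \<le> metric_dim V E"
    using card_mono[OF finite_subset[OF BV fin] basis_forced_vertices_subset[OF basis]]
      assms(4) card_B by simp
  moreover have "k < card (V - B)"
    using card_basis_forced_vertices_less_card_Diff[OF assms(2) fin basis] assms(4,5) by force
  moreover have "card (V - B) = n - metric_dim V E"
    using card_Diff_subset[OF finite_subset[OF BV fin] BV] assms(3) card_B by simp
  ultimately show ?thesis
    by linarith
qed

end
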